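(* Let $0\le B<B_n$, where $B_n=\dfrac{4\sqrt3}{\sqrt{169+38\sqrt{19}}}$. Put $$Z(r)=2r-3-B^2r^2\Big(\tfrac32 r-\tfrac54\Big),\qquad b(r)=1+\tfrac{B^2r^2}{4},$$ let $(r_1,r_2)=\{r>1: Z(r)>0\}$ (with $r_2=+\infty$ when $B=0$), and for $r_c\in(r_1,r_2)$ define $$L(r_c)=\frac{r_c}{b}\sqrt{\frac{4(b-1)(r_c-1)+b}{Z(r_c)}},\qquad E(r_c)=b\,(r_c-1)\sqrt{\frac{4-B^2r_c^2}{2r_cZ(r_c)}},\qquad b=b(r_c).$$ For $L=L(r_c)$, $E=E(r_c)$ the point $(p_r,p_\theta,r,\theta)=(0,0,r_c,\pi/2)$ is a fixed point of the Hamiltonian system with Hamiltonian $$H=\frac{\Gamma}{2\Lambda^2}p_r^2+\frac{p_\theta^2}{2r^2\Lambda^2}+\frac{L^2\Lambda^2}{2r^2\sin^2\theta}-\frac{E^2}{2\Lambda^2\Gamma},\quad \Lambda=1+\frac{B^2}{4}r^2\sin^2\theta,\quad \Gamma=1-\frac1r,$$ lying on the level set $H=-\tfrac12$. Let $$N(r)=64(r-3)+(4Br)^2(16r^2-39r+21)-4(Br)^4(24r^2-51r+25)+(Br)^6(24r^2-37r+15).$$ Then there is $r_*\in(r_1,r_2)$ with $N(r_* )=0$ such that: for $r_c\in(r_1,r_* )$ this fixed point is unstable, of saddle-center type, and for $r_c\in(r_*,r_2)$ it is stable, of center-center type (the effective potential has a strict minimum there). In particular $r_*=3$ when $B=0$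.
   Context: This is the reduced Hamiltonian system (canonical variables $(p_r,p_\theta,r,\theta)$, $r>1$, $0<\theta<\pi$) for time-like geodesics of neutral particles in the Schwarzschild–Melvin spacetime in dimensionless units (horizon at $r=1$), obtained by eliminating the cyclic coordinates $t,\varphi$ with conserved energy $E>0$ and angular momentum $L>0$; physical trajectories lie on $H=-1/2$. Fixed points with $\theta=\pi/2$ correspond to circular orbits in the equatorial plane. The effective potential is the $p$-independent part of $H$. *)

theory Defs
  imports "HOL-Analysis.Analysis"
begin

text \<open>Schwarzschild--Melvin neutral geodesics, reduced Hamiltonian system.
  Phase-space points are vectors z :: real^4 with
  z$1 = p_r, z$2 = p_theta, z$3 = r, z$4 = theta.\<close>

definition Bn :: real where
  "Bn = 4 * sqrt 3 / sqrt (169 + 38 * sqrt 19)"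

definition Lam :: "real \<Rightarrow> real \<Rightarrow> real \<Rightarrow> real" where
  "Lam B r th = 1 + B^2 / 4 * r^2 * (sin th)^2"

definition Gam :: "real \<Rightarrow> real" where
  "Gam r = 1 - 1 / r"

definition Ham :: "real \<Rightarrow> real \<Rightarrow> real \<Rightarrow> real^4 \<Rightarrow> real" where
  "Ham B L E z =
     Gam (z$3) / (2 * (Lam B (z$3) (z$4))^2) * (z$1)^2
     + (z$2)^2 / (2 * (z$3)^2 * (Lam B (z$3) (z$4))^2)
     + L^2 * (Lam B (z$3) (z$4))^2 / (2 * (z$3)^2 * (sin (z$4))^2)
     - E^2 / (2 * (Lam B (z$3) (z$4))^2 * Gam (z$3))"

definition Veff :: "real \<Rightarrow> real \<Rightarrow> real \<Rightarrow> real \<Rightarrow> real \<Rightarrow> real" where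
  "Veff B L E r th =
     L^2 * (Lam B r th)^2 / (2 * r^2 * (sin th)^2) - E^2 / (2 * (Lam B r th)^2 * Gam r)"

definition phase_pt :: "real \<Rightarrow> real \<Rightarrow> real \<Rightarrow> real \<Rightarrow> real^4" where
  "phase_pt pr pt r th = (\<chi> i. if i = 1 then pr else if i = 2 then pt else if i = 3 then r else th)"

definition pd :: "(real^4 \<Rightarrow> real) \<Rightarrow> 4 \<Rightarrow> real^4 \<Rightarrow> real" where
  "pd f i z = deriv (\<lambda>t. f (z + t *\<^sub>R axis i 1)) 0"

text \<open>Symplectic matrix: dp/dt = - dH/dq, dq/dt = dH/dp.\<close>
definition Jmat :: "real^4^4" where
  "Jmat = (\<chi> i j. if i = 1 \<and> j = 3 then -1 else if i = 2 \<and> j = 4 then -1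
                  else if i = 3 \<and> j = 1 then 1 else if i = 4 \<and> j = 2 then 1 else 0)"

definition HamVF :: "real \<Rightarrow> real \<Rightarrow> real \<Rightarrow> real^4 \<Rightarrow> real^4" where
  "HamVF B L E z = (\<chi> i. \<Sum>j\<in>UNIV. Jmat$i$j * pd (Ham B L E) j z)"

definition linHam :: "real \<Rightarrow> real \<Rightarrow> real \<Rightarrow> real^4 \<Rightarrow> real^4^4" where
  "linHam B L E z = (\<chi> i j. \<Sum>k\<in>UNIV. Jmat$i$k * pd (pd (Ham B L E) k) j z)"

definition spec4 :: "real^4^4 \<Rightarrow> complex set" where
  "spec4 A = {\<mu>. det ((\<chi> i j. (if i = j then \<mu> else 0) - complex_of_real (A$i$j)) :: complex^4^4) = 0}"

definition saddle_center :: "real^4^4 \<Rightarrow> bool" where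
  "saddle_center A \<longleftrightarrow> (\<exists>lam w. lam > 0 \<and> w > 0 \<and>
      spec4 A = {complex_of_real lam, - complex_of_real lam, \<i> * complex_of_real w, - \<i> * complex_of_real w})"

definition center_center :: "real^4^4 \<Rightarrow> bool" where
  "center_center A \<longleftrightarrow> (\<exists>w1 w2. w1 > 0 \<and> w2 > 0 \<and>
      spec4 A = {\<i> * complex_of_real w1, - \<i> * complex_of_real w1,
                 \<i> * complex_of_real w2, - \<i> * complex_of_real w2})"

definition lin_unstable :: "real^4^4 \<Rightarrow> bool" where
  "lin_unstable A \<longleftrightarrow> (\<exists>\<mu>\<in>spec4 A. Re \<mu> > 0)"

definition strict_local_min2 :: "(real \<Rightarrow> real \<Rightarrow> real) \<Rightarrow> real \<Rightarrow> real \<Rightarrow> bool" where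
  "strict_local_min2 V x0 y0 \<longleftrightarrow> (\<exists>e>0. \<forall>x y. (x, y) \<noteq> (x0, y0) \<and> dist (x, y) (x0, y0) < e
       \<longrightarrow> V x y > V x0 y0)"

definition Zf :: "real \<Rightarrow> real \<Rightarrow> real" where
  "Zf B r = 2 * r - 3 - B^2 * r^2 * (3/2 * r - 5/4)"

definition bf :: "real \<Rightarrow> real \<Rightarrow> real" where
  "bf B r = 1 + B^2 * r^2 / 4"

definition Lc :: "real \<Rightarrow> real \<Rightarrow> real" where
  "Lc B rc = rc / bf B rc * sqrt ((4 * (bf B rc - 1) * (rc - 1) + bf B rc) / Zf B rc)"

definition Ec :: "real \<Rightarrow> real \<Rightarrow> real" where
  "Ec B rc = bf B rc * (rc - 1) * sqrt ((4 - B^2 * rc^2) / (2 * rc * Zf B rc))"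

definition Nf :: "real \<Rightarrow> real \<Rightarrow> real" where
  "Nf B r = 64 * (r - 3) + (4 * B * r)^2 * (16 * r^2 - 39 * r + 21)
            - 4 * (B * r)^4 * (24 * r^2 - 51 * r + 25) + (B * r)^6 * (24 * r^2 - 37 * r + 15)"

end

theory Submission
  imports Defs
begin

(* On the equatorial plane the Hamiltonian is
     Gamma/(2 Lambda^2) p_r^2 + p_theta^2/(2 r^2 Lambda^2) + W(r, sin^2 theta),
   and at p = 0, theta = pi/2 its Hessian is diagonal, so the linearisation J Hess has the
   eigenvalues +-sqrt(-a W_rr) and +-i sqrt(-2 c W_u) with a, c > 0 (derivatives of W in r and in
   u = sin^2 theta, taken at u = 1).  On the circular orbit with L = L(r_c), E = E(r_c) one finds
   W_r = 0, W = -1/2, W_u = (b - 2)/(2 Z) < 0 (as B^2 r_c^2 < 4/3 wherever Z > 0) and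
   W_rr = N(r_c) / (64 b^2 r_c^2 (r_c - 1) Z), so the sign of N decides between saddle-centre and
   centre-centre; in the latter case W_rr > 0 and W_u < 0 also make the effective potential
   strictly minimal.
   N is strictly increasing wherever Z >= 0, and at a root of Z its sign is that of r - r_n,
   r_n = (8 + sqrt 19)/6.  As Z(r_n) > 0 for B < B_n, the roots r_1 < r_2 of Z (B > 0) enclose r_n,
   so N has exactly one sign change r_* on (r_1, r_2). *)

section \<open>The Hamiltonian in coordinates\<close>

lemma phase_pt_nth [simp]:
  "phase_pt a b c d $ 1 = a" "phase_pt a b c d $ 2 = b"
  "phase_pt a b c d $ 3 = c" "phase_pt a b c d $ 4 = d"
  by (simp_all add: phase_pt_def)

lemma deriv_shift_0: "deriv (\<lambda>t. f (x + t)) 0 = deriv (f :: real \<Rightarrow> real) x"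
proof -
  have "((\<lambda>t. f (x + t)) has_real_derivative D) (at 0) \<longleftrightarrow> (f has_real_derivative D) (at x)"
    for D
    using DERIV_shift[of f D 0 x] by (simp add: add.commute)
  then show ?thesis unfolding deriv_def by simp
qed

lemma deriv_eq_if_eventually_eq:
  assumes "\<forall>\<^sub>F x in nhds x0. f x = g x" and "(g has_real_derivative D) (at x0)"
  shows "deriv f x0 = D"
  using DERIV_cong_ev[OF refl assms(1) refl] assms(2) by (simp add: DERIV_imp_deriv)

lemma eventually_greater_nhds: "a < x \<Longrightarrow> \<forall>\<^sub>F y in nhds x. a < (y::real)"
  using order_tendstoD(1)[OF filterlim_ident] .

lemma eventually_sin_pos_pi_half: "\<forall>\<^sub>F y in nhds (pi/2). 0 < sin y"
  using order_tendstoD(1)[OF tendsto_sin[OF filterlim_ident, of "pi/2"]] by simp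

lemma pd_phase_pt:
  "pd f 1 (phase_pt a b c d) = deriv (\<lambda>x. f (phase_pt x b c d)) a"
  "pd f 2 (phase_pt a b c d) = deriv (\<lambda>x. f (phase_pt a x c d)) b"
  "pd f 3 (phase_pt a b c d) = deriv (\<lambda>x. f (phase_pt a b x d)) c"
  "pd f 4 (phase_pt a b c d) = deriv (\<lambda>x. f (phase_pt a b c x)) d"
proof -
  have axis: "phase_pt a b c d + t *\<^sub>R axis 1 1 = phase_pt (a + t) b c d"
    "phase_pt a b c d + t *\<^sub>R axis 2 1 = phase_pt a (b + t) c d"
    "phase_pt a b c d + t *\<^sub>R axis 3 1 = phase_pt a b (c + t) d"
    "phase_pt a b c d + t *\<^sub>R axis 4 1 = phase_pt a b c (d + t)" for t
    by (simp_all add: vec_eq_iff phase_pt_def axis_def forall_4)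
  show "pd f 1 (phase_pt a b c d) = deriv (\<lambda>x. f (phase_pt x b c d)) a"
    using deriv_shift_0[of "\<lambda>x. f (phase_pt x b c d)" a] by (simp add: pd_def axis)
  show "pd f 2 (phase_pt a b c d) = deriv (\<lambda>x. f (phase_pt a x c d)) b"
    using deriv_shift_0[of "\<lambda>x. f (phase_pt a x c d)" b] by (simp add: pd_def axis)
  show "pd f 3 (phase_pt a b c d) = deriv (\<lambda>x. f (phase_pt a b x d)) c"
    using deriv_shift_0[of "\<lambda>x. f (phase_pt a b x d)" c] by (simp add: pd_def axis)
  show "pd f 4 (phase_pt a b c d) = deriv (\<lambda>x. f (phase_pt a b c x)) d"
    using deriv_shift_0[of "\<lambda>x. f (phase_pt a b c x)" d] by (simp add: pd_def axis)
qed

lemma Lam_pos: "0 < Lam B r th"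
  unfolding Lam_def by (simp add: add_pos_nonneg)

lemma Ham_phase_pt:
  "Ham B L E (phase_pt pr pt r th) =
     Gam r / (2 * (Lam B r th)^2) * pr^2 + 1 / (2 * r^2 * (Lam B r th)^2) * pt^2 + Veff B L E r th"
  by (simp add: Ham_def Veff_def)

lemma deriv_quadratic: "deriv (\<lambda>x. a * x^2 + c) p = 2 * a * (p::real)"
  by (rule DERIV_imp_deriv) (auto intro!: derivative_eq_intros)

lemma pd_Ham_1: "pd (Ham B L E) 1 (phase_pt pr pt r th) = Gam r / (Lam B r th)^2 * pr"
proof -
  have eq: "(\<lambda>x. Ham B L E (phase_pt x pt r th)) = (\<lambda>x. Gam r / (2 * (Lam B r th)^2) * x^2
      + (1 / (2 * r^2 * (Lam B r th)^2) * pt^2 + Veff B L E r th))"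
    by (simp add: Ham_phase_pt ac_simps)
  show ?thesis unfolding pd_phase_pt eq deriv_quadratic by simp
qed

lemma pd_Ham_2: "pd (Ham B L E) 2 (phase_pt pr pt r th) = 1 / (r^2 * (Lam B r th)^2) * pt"
proof -
  have eq: "(\<lambda>x. Ham B L E (phase_pt pr x r th)) = (\<lambda>x. 1 / (2 * r^2 * (Lam B r th)^2) * x^2
      + (Gam r / (2 * (Lam B r th)^2) * pr^2 + Veff B L E r th))"
    by (simp add: Ham_phase_pt ac_simps)
  show ?thesis unfolding pd_phase_pt eq deriv_quadratic by simp
qed

definition lam :: "real \<Rightarrow> real \<Rightarrow> real \<Rightarrow> real" where
  "lam B r u = 1 + B^2 * r^2 * u / 4"

lemma lam_pos: "0 \<le> u \<Longrightarrow> 0 < lam B r u"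
  unfolding lam_def by (simp add: add_pos_nonneg)

lemma Lam_eq_lam: "Lam B r th = lam B r ((sin th)^2)"
  by (simp add: Lam_def lam_def)

lemma lam_1: "lam B r 1 = bf B r"
  by (simp add: lam_def bf_def)

lemma Lam_pi_half: "Lam B r (pi/2) = bf B r"
  by (simp add: Lam_eq_lam lam_1)

lemma lam_has_derivative_r:
  "r \<noteq> 0 \<Longrightarrow> ((\<lambda>r. lam B r u) has_real_derivative 2 * (lam B r u - 1) / r) (at r)"
  unfolding lam_def by (auto intro!: derivative_eq_intros simp: field_simps power2_eq_square)

lemma lam_has_derivative_u:
  "u \<noteq> 0 \<Longrightarrow> ((\<lambda>u. lam B r u) has_real_derivative (lam B r u - 1) / u) (at u)"
  unfolding lam_def by (auto intro!: derivative_eq_intros simp: field_simps)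

definition Wpot :: "real \<Rightarrow> real \<Rightarrow> real \<Rightarrow> real \<Rightarrow> real \<Rightarrow> real" where
  "Wpot B L E r u = L^2 / (2 * u) * ((lam B r u)^2 / r^2) - E^2 / 2 * (r / ((lam B r u)^2 * (r - 1)))"

definition Wpot_r :: "real \<Rightarrow> real \<Rightarrow> real \<Rightarrow> real \<Rightarrow> real \<Rightarrow> real" where
  "Wpot_r B L E r u = L^2 * lam B r u * (lam B r u - 2) / (r^3 * u)
     + E^2 * (lam B r u + 4 * (lam B r u - 1) * (r - 1)) / (2 * (lam B r u)^3 * (r - 1)^2)"

definition Wpot_u :: "real \<Rightarrow> real \<Rightarrow> real \<Rightarrow> real \<Rightarrow> real \<Rightarrow> real" where
  "Wpot_u B L E r u = L^2 * lam B r u * (lam B r u - 2) / (2 * r^2 * u^2)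
     + E^2 * r * (lam B r u - 1) / ((r - 1) * u * (lam B r u)^3)"

lemma Veff_eq_Wpot:
  assumes "1 < r"
  shows "Veff B L E r th = Wpot B L E r ((sin th)^2)"
proof -
  have "Gam r = (r - 1) / r" using assms by (simp add: Gam_def field_simps)
  then show ?thesis by (simp add: Veff_def Wpot_def Lam_eq_lam ac_simps)
qed

lemma has_real_derivative_Wpot_r:
  assumes "1 < r" "0 < u"
  shows "((\<lambda>r. Wpot B L E r u) has_real_derivative Wpot_r B L E r u) (at r)"
proof -
  define l m where "l = lam B r u" and "m = r - 1"
  have nz: "l \<noteq> 0" "m \<noteq> 0" "r \<noteq> 0" "u \<noteq> 0"
    using assms lam_pos[of u B r] by (auto simp: l_def m_def)
  have "((\<lambda>r. (lam B r u)^2 / r^2) has_real_derivative 2 * l * (l - 2) / r^3) (at r)"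
    using nz unfolding l_def
    by (auto intro!: derivative_eq_intros lam_has_derivative_r simp: field_simps power2_eq_square power3_eq_cube)
  moreover have "((\<lambda>r. r / ((lam B r u)^2 * (r - 1))) has_real_derivative
      - (l + 4 * (l - 1) * m) / (l^3 * m^2)) (at r)"
  proof -
    have "((\<lambda>r. (lam B r u)^2 * (r - 1)) has_real_derivative 4 * l * (l - 1) * m / r + l^2) (at r)"
      using nz unfolding l_def m_def
      by (auto intro!: derivative_eq_intros lam_has_derivative_r simp: field_simps)
    from DERIV_divide[OF DERIV_ident this]
    have "((\<lambda>r. r / ((lam B r u)^2 * (r - 1))) has_real_derivative
        (1 * (l^2 * m) - r * (4 * l * (l - 1) * m / r + l^2)) / (l^2 * m * (l^2 * m))) (at r)"
      using nz by (simp add: l_def m_def)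
    moreover have "(1 * (l^2 * m) - r * (4 * l * (l - 1) * m / r + l^2)) / (l^2 * m * (l^2 * m))
        = - (l + 4 * (l - 1) * m) / (l^3 * m^2)"
      using nz by (simp add: field_simps power2_eq_square power3_eq_cube) (simp add: m_def algebra_simps)
    ultimately show ?thesis by simp
  qed
  ultimately have "((\<lambda>r. Wpot B L E r u) has_real_derivative
      L^2 / (2 * u) * (2 * l * (l - 2) / r^3) - E^2 / 2 * (- (l + 4 * (l - 1) * m) / (l^3 * m^2))) (at r)"
    unfolding Wpot_def by (intro DERIV_diff DERIV_cmult)
  moreover have "L^2 / (2 * u) * (2 * l * (l - 2) / r^3) - E^2 / 2 * (- (l + 4 * (l - 1) * m) / (l^3 * m^2))
      = Wpot_r B L E r u"
    unfolding Wpot_r_def l_def[symmetric] m_def[symmetric] using nz by (simp add: field_simps)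
  ultimately show ?thesis by simp
qed

lemma has_real_derivative_Wpot_u:
  assumes "1 < r" "0 < u"
  shows "((\<lambda>u. Wpot B L E r u) has_real_derivative Wpot_u B L E r u) (at u)"
proof -
  define l m where "l = lam B r u" and "m = r - 1"
  have nz: "l \<noteq> 0" "m \<noteq> 0" "r \<noteq> 0" "u \<noteq> 0"
    using assms lam_pos[of u B r] by (auto simp: l_def m_def)
  have "((\<lambda>u. L^2 / (2 * u) * ((lam B r u)^2 / r^2) - E^2 / 2 * (r / ((lam B r u)^2 * m)))
      has_real_derivative Wpot_u B L E r u) (at u)"
    using nz unfolding Wpot_u_def m_def[symmetric]
    by (auto intro!: derivative_eq_intros lam_has_derivative_u
        simp: l_def[symmetric] field_simps power2_eq_square power3_eq_cube)
  then show ?thesis unfolding Wpot_def m_def .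
qed

definition Wpot_rr :: "real \<Rightarrow> real \<Rightarrow> real \<Rightarrow> real \<Rightarrow> real" where
  "Wpot_rr B L E r = L^2 * ((bf B r)^2 - 2 * bf B r + 4) / r^4
     + E^2 * (6 * (bf B r - 1) * (2 * r - 1) * bf B r * (r - 1)
        - (4 * (bf B r - 1) * (r - 1) + bf B r) * (6 * (bf B r - 1) * (r - 1) + 2 * r * bf B r))
       / (2 * r * (bf B r)^4 * (r - 1)^3)"

lemma has_real_derivative_Wpot_r_1:
  assumes "1 < r"
  shows "((\<lambda>r. Wpot_r B L E r 1) has_real_derivative Wpot_rr B L E r) (at r)"
proof -
  define b m where "b = bf B r" and "m = r - 1"
  have nz: "b \<noteq> 0" "m \<noteq> 0" "r \<noteq> 0"
    using assms lam_pos[of 1 B r] by (auto simp: b_def m_def lam_1)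
  have b: "lam B r 1 = b" by (simp add: lam_1 b_def)
  have F1: "((\<lambda>r. lam B r 1 * (lam B r 1 - 2) / (r^3 * 1)) has_real_derivative
      (b^2 - 2 * b + 4) / r^4) (at r)"
    using nz unfolding b[symmetric]
    by (auto intro!: derivative_eq_intros lam_has_derivative_r
        simp: field_simps power2_eq_square power3_eq_cube power4_eq_xxxx)
  have num: "((\<lambda>r. lam B r 1 + 4 * (lam B r 1 - 1) * (r - 1)) has_real_derivative
      2 * (b - 1) * (1 + 4 * m) / r + 4 * (b - 1)) (at r)"
    using nz unfolding b[symmetric] m_def
    by (auto intro!: derivative_eq_intros lam_has_derivative_r simp: field_simps)
  have den: "((\<lambda>r. 2 * (lam B r 1)^3 * (r - 1)^2) has_real_derivative
      12 * b^2 * (b - 1) * m^2 / r + 4 * b^3 * m) (at r)"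
    using nz unfolding b[symmetric] m_def
    by (auto intro!: derivative_eq_intros lam_has_derivative_r
        simp: field_simps power2_eq_square power3_eq_cube)
  have "((\<lambda>r. (lam B r 1 + 4 * (lam B r 1 - 1) * (r - 1)) / (2 * (lam B r 1)^3 * (r - 1)^2))
      has_real_derivative ((2 * (b - 1) * (1 + 4 * m) / r + 4 * (b - 1)) * (2 * b^3 * m^2)
        - (b + 4 * (b - 1) * m) * (12 * b^2 * (b - 1) * m^2 / r + 4 * b^3 * m))
        / (2 * b^3 * m^2 * (2 * b^3 * m^2))) (at r)"
    using DERIV_divide[OF num den] nz by (simp add: b m_def)
  moreover have "((2 * (b - 1) * (1 + 4 * m) / r + 4 * (b - 1)) * (2 * b^3 * m^2)
        - (b + 4 * (b - 1) * m) * (12 * b^2 * (b - 1) * m^2 / r + 4 * b^3 * m))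
        / (2 * b^3 * m^2 * (2 * b^3 * m^2))
      = (6 * (b - 1) * (2 * r - 1) * b * m - (4 * (b - 1) * m + b) * (6 * (b - 1) * m + 2 * r * b))
        / (2 * r * b^4 * m^3)"
    using nz by (simp add: field_simps power2_eq_square power3_eq_cube) (unfold m_def, algebra)
  ultimately have F2: "((\<lambda>r. (lam B r 1 + 4 * (lam B r 1 - 1) * (r - 1)) / (2 * (lam B r 1)^3 * (r - 1)^2))
      has_real_derivative
        (6 * (b - 1) * (2 * r - 1) * b * m - (4 * (b - 1) * m + b) * (6 * (b - 1) * m + 2 * r * b))
        / (2 * r * b^4 * m^3)) (at r)"
    by simp
  have "((\<lambda>r. L^2 * (lam B r 1 * (lam B r 1 - 2) / (r^3 * 1))
      + E^2 * ((lam B r 1 + 4 * (lam B r 1 - 1) * (r - 1)) / (2 * (lam B r 1)^3 * (r - 1)^2)))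
      has_real_derivative L^2 * ((b^2 - 2 * b + 4) / r^4)
        + E^2 * ((6 * (b - 1) * (2 * r - 1) * b * m
          - (4 * (b - 1) * m + b) * (6 * (b - 1) * m + 2 * r * b)) / (2 * r * b^4 * m^3))) (at r)"
    by (intro DERIV_add DERIV_cmult F1 F2)
  also have "L^2 * ((b^2 - 2 * b + 4) / r^4)
        + E^2 * ((6 * (b - 1) * (2 * r - 1) * b * m
          - (4 * (b - 1) * m + b) * (6 * (b - 1) * m + 2 * r * b)) / (2 * r * b^4 * m^3))
      = Wpot_rr B L E r"
    unfolding Wpot_rr_def b_def m_def by simp
  finally show ?thesis by (simp add: Wpot_r_def mult.assoc)
qed

lemma pd_Ham_3:
  assumes "1 < r" "sin th \<noteq> 0"
  shows "pd (Ham B L E) 3 (phase_pt pr pt r th) =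
     pr^2 * deriv (\<lambda>r. Gam r / (2 * (Lam B r th)^2)) r
     + pt^2 * deriv (\<lambda>r. 1 / (2 * r^2 * (Lam B r th)^2)) r + Wpot_r B L E r ((sin th)^2)"
proof -
  let ?A = "\<lambda>r. Gam r / (2 * (Lam B r th)^2)" and ?C = "\<lambda>r. 1 / (2 * r^2 * (Lam B r th)^2)"
  have Lam: "Lam B x th \<noteq> 0" for x
    using Lam_pos[of B x th] by simp
  have "\<exists>D. (?A has_real_derivative D) (at r)" "\<exists>D. (?C has_real_derivative D) (at r)"
    using assms Lam[unfolded Lam_def] unfolding Gam_def Lam_def
    by (auto intro!: exI derivative_eq_intros)
  then have "(?A has_real_derivative deriv ?A r) (at r)" "(?C has_real_derivative deriv ?C r) (at r)"
    using DERIV_deriv_iff_has_field_derivative by blast+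
  moreover have "((\<lambda>r. Wpot B L E r ((sin th)^2)) has_real_derivative Wpot_r B L E r ((sin th)^2)) (at r)"
    using assms by (intro has_real_derivative_Wpot_r) auto
  ultimately have "((\<lambda>r. pr^2 * ?A r + pt^2 * ?C r + Wpot B L E r ((sin th)^2)) has_real_derivative
      pr^2 * deriv ?A r + pt^2 * deriv ?C r + Wpot_r B L E r ((sin th)^2)) (at r)"
    by (intro DERIV_add DERIV_cmult)
  moreover have "\<forall>\<^sub>F x in nhds r.
      Ham B L E (phase_pt pr pt x th) = pr^2 * ?A x + pt^2 * ?C x + Wpot B L E x ((sin th)^2)"
    using eventually_greater_nhds[OF assms(1)]
    by eventually_elim (simp add: Ham_phase_pt Veff_eq_Wpot ac_simps)
  ultimately show ?thesis
    unfolding pd_phase_pt by (rule deriv_eq_if_eventually_eq[rotated])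
qed

lemma pd_Ham_4:
  assumes "1 < r" "sin th \<noteq> 0"
  shows "pd (Ham B L E) 4 (phase_pt pr pt r th) =
    (Wpot_u B L E r ((sin th)^2) - (pr^2 * Gam r + pt^2 / r^2) * (lam B r ((sin th)^2) - 1)
       / ((sin th)^2 * (lam B r ((sin th)^2))^3)) * (2 * sin th * cos th)"
proof -
  define K where "K = pr^2 * Gam r + pt^2 / r^2"
  define u where "u = (sin th)^2"
  let ?g = "\<lambda>u. K / 2 * (1 / (lam B r u)^2) + Wpot B L E r u"
  have nz: "0 < u" "lam B r u \<noteq> 0"
    using assms lam_pos[of u B r] by (auto simp: u_def)
  have dg: "(?g has_real_derivative Wpot_u B L E r u - K * (lam B r u - 1) / (u * (lam B r u)^3)) (at u)"
    using assms nz
    by (auto intro!: derivative_eq_intros lam_has_derivative_u has_real_derivative_Wpot_u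
        simp: field_simps power2_eq_square power3_eq_cube)
  have ds: "((\<lambda>y. (sin y)^2) has_real_derivative 2 * sin th * cos th) (at th)"
    by (auto intro!: derivative_eq_intros)
  have "Ham B L E (phase_pt pr pt r y) = ?g ((sin y)^2)" for y
    using assms lam_pos[of "(sin y)^2" B r]
    by (simp add: Ham_phase_pt Veff_eq_Wpot Lam_eq_lam K_def field_simps)
  then show ?thesis
    using DERIV_chain2[OF _ ds, OF dg[unfolded u_def]]
    unfolding pd_phase_pt u_def K_def by (simp add: DERIV_imp_deriv)
qed


section \<open>Linearisation at the equatorial plane\<close>

abbreviation equator :: "real \<Rightarrow> real^4" where
  "equator r \<equiv> phase_pt 0 0 r (pi/2)"

lemma Hessian_Ham_row_1:
  "pd (pd (Ham B L E) 1) 1 (equator r) = Gam r / (bf B r)^2"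
  "pd (pd (Ham B L E) 1) 2 (equator r) = 0"
  "pd (pd (Ham B L E) 1) 3 (equator r) = 0"
  "pd (pd (Ham B L E) 1) 4 (equator r) = 0"
  unfolding pd_phase_pt[of "pd (Ham B L E) 1"] by (simp_all only: pd_Ham_1 Lam_pi_half deriv_linear) simp_all

lemma Hessian_Ham_row_2:
  "pd (pd (Ham B L E) 2) 1 (equator r) = 0"
  "pd (pd (Ham B L E) 2) 2 (equator r) = 1 / (r^2 * (bf B r)^2)"
  "pd (pd (Ham B L E) 2) 3 (equator r) = 0"
  "pd (pd (Ham B L E) 2) 4 (equator r) = 0"
  unfolding pd_phase_pt[of "pd (Ham B L E) 2"] by (simp_all only: pd_Ham_2 Lam_pi_half deriv_linear) simp_all

lemma deriv_sin_sq_pi_half: "((\<lambda>y. (sin y)^2) has_real_derivative 0) (at (pi/2))"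
  by (auto intro!: derivative_eq_intros)

lemma Hessian_Ham_row_3:
  assumes "1 < r"
  shows "pd (pd (Ham B L E) 3) 1 (equator r) = 0"
    and "pd (pd (Ham B L E) 3) 2 (equator r) = 0"
    and "pd (pd (Ham B L E) 3) 3 (equator r) = deriv (\<lambda>r. Wpot_r B L E r 1) r"
    and "pd (pd (Ham B L E) 3) 4 (equator r) = 0"
proof -
  show "pd (pd (Ham B L E) 3) 1 (equator r) = 0" "pd (pd (Ham B L E) 3) 2 (equator r) = 0"
    unfolding pd_phase_pt[of "pd (Ham B L E) 3"] using assms
    by (simp_all add: pd_Ham_3) (rule DERIV_imp_deriv, auto intro!: derivative_eq_intros)+
  have "\<forall>\<^sub>F x in nhds r. pd (Ham B L E) 3 (phase_pt 0 0 x (pi/2)) = Wpot_r B L E x 1"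
    using eventually_greater_nhds[OF assms] by eventually_elim (simp add: pd_Ham_3)
  then show "pd (pd (Ham B L E) 3) 3 (equator r) = deriv (\<lambda>r. Wpot_r B L E r 1) r"
    unfolding pd_phase_pt[of "pd (Ham B L E) 3"] by (rule deriv_cong_ev) simp
  have "lam B r 1 \<noteq> 0" using lam_pos[of 1 B r] by simp
  then obtain D where "((\<lambda>u. Wpot_r B L E r u) has_real_derivative D) (at ((sin (pi/2))^2))"
    using assms unfolding Wpot_r_def
    by (fastforce intro!: derivative_eq_intros lam_has_derivative_u)
  from DERIV_chain2[OF this deriv_sin_sq_pi_half]
  have "((\<lambda>y. Wpot_r B L E r ((sin y)^2)) has_real_derivative 0) (at (pi/2))"
    by simp
  moreover have "\<forall>\<^sub>F y in nhds (pi/2). pd (Ham B L E) 3 (phase_pt 0 0 r y) = Wpot_r B L E r ((sin y)^2)"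
    using eventually_sin_pos_pi_half by eventually_elim (simp add: pd_Ham_3 assms)
  ultimately show "pd (pd (Ham B L E) 3) 4 (equator r) = 0"
    unfolding pd_phase_pt[of "pd (Ham B L E) 3"] by (rule deriv_eq_if_eventually_eq[rotated])
qed

lemma Hessian_Ham_row_4:
  assumes "1 < r"
  shows "pd (pd (Ham B L E) 4) 1 (equator r) = 0"
    and "pd (pd (Ham B L E) 4) 2 (equator r) = 0"
    and "pd (pd (Ham B L E) 4) 3 (equator r) = 0"
    and "pd (pd (Ham B L E) 4) 4 (equator r) = - 2 * Wpot_u B L E r 1"
proof -
  show "pd (pd (Ham B L E) 4) 1 (equator r) = 0" "pd (pd (Ham B L E) 4) 2 (equator r) = 0"
    unfolding pd_phase_pt[of "pd (Ham B L E) 4"] using assms by (simp_all add: pd_Ham_4)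
  have "\<forall>\<^sub>F x in nhds r. pd (Ham B L E) 4 (phase_pt 0 0 x (pi/2)) = 0"
    using eventually_greater_nhds[OF assms] by eventually_elim (simp add: pd_Ham_4)
  then show "pd (pd (Ham B L E) 4) 3 (equator r) = 0"
    unfolding pd_phase_pt[of "pd (Ham B L E) 4"] by (rule deriv_eq_if_eventually_eq) simp
  have "lam B r 1 \<noteq> 0" using lam_pos[of 1 B r] by simp
  then obtain D where "((\<lambda>u. Wpot_u B L E r u) has_real_derivative D) (at ((sin (pi/2))^2))"
    using assms unfolding Wpot_u_def
    by (fastforce intro!: derivative_eq_intros lam_has_derivative_u)
  from DERIV_chain2[OF this deriv_sin_sq_pi_half]
  have "((\<lambda>y. Wpot_u B L E r ((sin y)^2)) has_real_derivative 0) (at (pi/2))"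
    by simp
  moreover have "((\<lambda>y. 2 * sin y * cos y) has_real_derivative - 2) (at (pi/2))"
    by (auto intro!: derivative_eq_intros)
  ultimately have "((\<lambda>y. Wpot_u B L E r ((sin y)^2) * (2 * sin y * cos y)) has_real_derivative
      - 2 * Wpot_u B L E r 1) (at (pi/2))"
    using DERIV_mult by fastforce
  moreover have "\<forall>\<^sub>F y in nhds (pi/2).
      pd (Ham B L E) 4 (phase_pt 0 0 r y) = Wpot_u B L E r ((sin y)^2) * (2 * sin y * cos y)"
    using eventually_sin_pos_pi_half by eventually_elim (simp add: pd_Ham_4 assms)
  ultimately show "pd (pd (Ham B L E) 4) 4 (equator r) = - 2 * Wpot_u B L E r 1"
    unfolding pd_phase_pt[of "pd (Ham B L E) 4"] by (rule deriv_eq_if_eventually_eq[rotated])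
qed

definition Jmat_diag :: "real \<Rightarrow> real \<Rightarrow> real \<Rightarrow> real \<Rightarrow> real^4^4" where
  "Jmat_diag d1 d2 d3 d4 =
     (\<chi> i j. Jmat$i$j * (if j = 1 then d1 else if j = 2 then d2 else if j = 3 then d3 else d4))"

lemma linHam_equator:
  assumes "1 < r"
  shows "linHam B L E (equator r) = Jmat_diag (Gam r / (bf B r)^2) (1 / (r^2 * (bf B r)^2))
           (deriv (\<lambda>r. Wpot_r B L E r 1) r) (- 2 * Wpot_u B L E r 1)"
  using assms
  by (simp add: linHam_def Jmat_diag_def Jmat_def vec_eq_iff forall_4 sum_4
      Hessian_Ham_row_1 Hessian_Ham_row_2 Hessian_Ham_row_3 Hessian_Ham_row_4)

lemma HamVF_equator:
  assumes "1 < r"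
  shows "HamVF B L E (equator r) = 0 \<longleftrightarrow> Wpot_r B L E r 1 = 0"
  using assms by (simp add: HamVF_def vec_eq_iff forall_4 sum_4 Jmat_def pd_Ham_1 pd_Ham_2 pd_Ham_3 pd_Ham_4)

lemma det_4:
  "det (A::'a::comm_ring_1^4^4) =
     A$1$1 * A$2$2 * A$3$3 * A$4$4 - A$1$1 * A$2$2 * A$3$4 * A$4$3
   - A$1$1 * A$2$3 * A$3$2 * A$4$4 + A$1$1 * A$2$3 * A$3$4 * A$4$2
   + A$1$1 * A$2$4 * A$3$2 * A$4$3 - A$1$1 * A$2$4 * A$3$3 * A$4$2
   - A$1$2 * A$2$1 * A$3$3 * A$4$4 + A$1$2 * A$2$1 * A$3$4 * A$4$3
   + A$1$2 * A$2$3 * A$3$1 * A$4$4 - A$1$2 * A$2$3 * A$3$4 * A$4$1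
   - A$1$2 * A$2$4 * A$3$1 * A$4$3 + A$1$2 * A$2$4 * A$3$3 * A$4$1
   + A$1$3 * A$2$1 * A$3$2 * A$4$4 - A$1$3 * A$2$1 * A$3$4 * A$4$2
   - A$1$3 * A$2$2 * A$3$1 * A$4$4 + A$1$3 * A$2$2 * A$3$4 * A$4$1
   + A$1$3 * A$2$4 * A$3$1 * A$4$2 - A$1$3 * A$2$4 * A$3$2 * A$4$1
   - A$1$4 * A$2$1 * A$3$2 * A$4$3 + A$1$4 * A$2$1 * A$3$3 * A$4$2
   + A$1$4 * A$2$2 * A$3$1 * A$4$3 - A$1$4 * A$2$2 * A$3$3 * A$4$1
   - A$1$4 * A$2$3 * A$3$1 * A$4$2 + A$1$4 * A$2$3 * A$3$2 * A$4$1"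
proof -
  have sign_transpose_comp: "permutation q \<Longrightarrow>
      sign (Transposition.transpose a b \<circ> q) = (if a = b then 1 else -1) * sign q"
    for q :: "4 \<Rightarrow> 4" and a b :: 4
    by (simp add: sign_compose permutation_swap_id sign_swap_id)
  have permutation_transpose_comp: "permutation q \<Longrightarrow>
      permutation (Transposition.transpose a b \<circ> q)"
    for q :: "4 \<Rightarrow> 4" and a b :: 4
    by (simp add: permutation_compose permutation_swap_id)
  have f1: "finite {2::4, 3, 4}" "1 \<notin> {2::4, 3, 4}" by auto
  have f2: "finite {3::4, 4}" "2 \<notin> {3::4, 4}" by auto
  have f3: "finite {4::4}" "3 \<notin> {4::4}" by auto
  show ?thesis
    unfolding det_def UNIV_4
    unfolding sum_over_permutations_insert[OF f1]
    unfolding sum_over_permutations_insert[OF f2]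
    unfolding sum_over_permutations_insert[OF f3]
    unfolding permutes_sing
    by (simp add: sign_transpose_comp permutation_transpose_comp sign_swap_id permutation_swap_id
        sign_compose sign_id swap_id_eq algebra_simps)
qed

lemma spec4_Jmat_diag:
  "spec4 (Jmat_diag d1 d2 d3 d4) =
     {\<mu>. (\<mu>^2 + complex_of_real (d1 * d3)) * (\<mu>^2 + complex_of_real (d2 * d4)) = 0}"
  unfolding spec4_def by (simp add: det_4 Jmat_diag_def Jmat_def algebra_simps power2_eq_square)

lemma complex_sq_plus_sq_eq_0_iff:
  "\<mu>^2 + (complex_of_real w)^2 = 0 \<longleftrightarrow>
     \<mu> = \<i> * complex_of_real w \<or> \<mu> = - \<i> * complex_of_real w"
proof -
  have "\<mu>^2 + (complex_of_real w)^2 = (\<mu> - \<i> * w) * (\<mu> + \<i> * w)"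
    by (simp add: algebra_simps power2_eq_square)
  then show ?thesis by (auto simp: eq_neg_iff_add_eq_0)
qed

lemma complex_sq_minus_sq_eq_0_iff:
  "\<mu>^2 - (complex_of_real w)^2 = 0 \<longleftrightarrow>
     \<mu> = complex_of_real w \<or> \<mu> = - complex_of_real w"
proof -
  have "\<mu>^2 - (complex_of_real w)^2 = (\<mu> - w) * (\<mu> + w)"
    by (simp add: algebra_simps power2_eq_square)
  then show ?thesis by (auto simp: eq_neg_iff_add_eq_0)
qed

lemma saddle_center_Jmat_diag:
  assumes "d1 * d3 < 0" "0 < d2 * d4"
  shows "saddle_center (Jmat_diag d1 d2 d3 d4) \<and> lin_unstable (Jmat_diag d1 d2 d3 d4)"
proof -
  define l where "l = sqrt (- (d1 * d3))"
  define w where "w = sqrt (d2 * d4)"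
  have l: "0 < l" "complex_of_real (d1 * d3) = - ((complex_of_real l)^2)"
    using assms by (auto simp: l_def simp flip: of_real_power)
  have w: "0 < w" "complex_of_real (d2 * d4) = (complex_of_real w)^2"
    using assms by (auto simp: w_def simp flip: of_real_power)
  have "spec4 (Jmat_diag d1 d2 d3 d4) = {complex_of_real l, - complex_of_real l,
      \<i> * complex_of_real w, - \<i> * complex_of_real w}"
    unfolding spec4_Jmat_diag l(2) w(2)
    using complex_sq_plus_sq_eq_0_iff complex_sq_minus_sq_eq_0_iff by auto
  then show ?thesis unfolding saddle_center_def lin_unstable_def using l w by auto
qed

lemma center_center_Jmat_diag:
  assumes "0 < d1 * d3" "0 < d2 * d4"
  shows "center_center (Jmat_diag d1 d2 d3 d4)"
proof -
  define l where "l = sqrt (d1 * d3)"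
  define w where "w = sqrt (d2 * d4)"
  have l: "0 < l" "complex_of_real (d1 * d3) = (complex_of_real l)^2"
    using assms by (auto simp: l_def simp flip: of_real_power)
  have w: "0 < w" "complex_of_real (d2 * d4) = (complex_of_real w)^2"
    using assms by (auto simp: w_def simp flip: of_real_power)
  have "spec4 (Jmat_diag d1 d2 d3 d4) = {\<i> * complex_of_real l, - \<i> * complex_of_real l,
      \<i> * complex_of_real w, - \<i> * complex_of_real w}"
    unfolding spec4_Jmat_diag l(2) w(2) using complex_sq_plus_sq_eq_0_iff by auto
  then show ?thesis unfolding center_center_def using l w by auto
qed

section \<open>Strict minima of the effective potential\<close>

lemma second_derivative_test_strict_min:
  fixes f f' :: "real \<Rightarrow> real"
  assumes deriv: "\<forall>\<^sub>F x in nhds x0. (f has_real_derivative f' x) (at x)"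
    and crit: "f' x0 = 0" and f'': "(f' has_real_derivative p) (at x0)" and "0 < p"
  shows "\<forall>\<^sub>F x in at x0. f x0 < f x"
proof -
  have "((\<lambda>x. f' x / (x - x0)) \<longlongrightarrow> p) (at x0)"
    using f'' crit by (simp add: has_field_derivative_iff)
  then have "\<forall>\<^sub>F x in at x0. 0 < f' x / (x - x0)"
    using \<open>0 < p\<close> by (rule order_tendstoD(1))
  then have "\<forall>\<^sub>F x in nhds x0.
      (f has_real_derivative f' x) (at x) \<and> (x \<noteq> x0 \<longrightarrow> 0 < f' x / (x - x0))"
    using deriv unfolding eventually_at_filter by eventually_elim auto
  then obtain d where "0 < d"
    and d: "\<And>x. dist x x0 < d \<Longrightarrow>
      (f has_real_derivative f' x) (at x) \<and> (x \<noteq> x0 \<longrightarrow> 0 < f' x / (x - x0))"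
    unfolding eventually_nhds_metric by blast
  have "f x0 < f x" if ne: "x \<noteq> x0" and near: "dist x x0 < d" for x
  proof (cases "x0 < x")
    case True
    then obtain z where z: "x0 < z" "z < x" "f x - f x0 = (x - x0) * f' z"
      using MVT2[of x0 x f f'] d near by (force simp: dist_real_def)
    then have "0 < f' z / (z - x0)" using d[of z] near by (auto simp: dist_real_def)
    with z have "0 < (x - x0) * f' z" by (simp add: zero_less_divide_iff)
    with z show ?thesis by simp
  next
    case False
    with ne have "x < x0" by simp
    then obtain z where z: "x < z" "z < x0" "f x0 - f x = (x0 - x) * f' z"
      using MVT2[of x x0 f f'] d near by (force simp: dist_real_def)
    then have "0 < f' z / (z - x0)" using d[of z] near by (auto simp: dist_real_def)
    with z have "(x0 - x) * f' z < 0" by (simp add: zero_less_divide_iff mult_pos_neg)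
    with z show ?thesis by simp
  qed
  with \<open>0 < d\<close> show ?thesis unfolding eventually_at by blast
qed

lemma eventually_less_at_left_of_deriv_neg:
  fixes W W' :: "real \<Rightarrow> real \<Rightarrow> real"
  assumes "\<forall>\<^sub>F (x, u) in nhds (x0, u0). (W x has_real_derivative W' x u) (at u) \<and> W' x u < 0"
  shows "\<forall>\<^sub>F (x, u) in nhds x0 \<times>\<^sub>F at_left u0. W x u0 < W x u"
proof -
  obtain Pf Pg where Pf: "eventually Pf (nhds x0)" and Pg: "eventually Pg (nhds u0)"
    and P: "\<And>x u. Pf x \<Longrightarrow> Pg u \<Longrightarrow>
      (W x has_real_derivative W' x u) (at u) \<and> W' x u < 0"
    using assms unfolding nhds_prod eventually_prod_filter by auto
  from Pg obtain d where "0 < d" and d: "\<And>u. dist u u0 < d \<Longrightarrow> Pg u"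
    unfolding eventually_nhds_metric by blast
  have "W x u0 < W x u" if "Pf x" "u0 - d < u" "u < u0" for x u
  proof -
    have Pg_between: "Pg z" if "u \<le> z" "z \<le> u0" for z
      using d that \<open>u0 - d < u\<close> by (simp add: dist_real_def)
    obtain z where z: "u < z" "z < u0" "W x u0 - W x u = (u0 - u) * W' x z"
      using MVT2[of u u0 "W x" "W' x"] P[OF \<open>Pf x\<close> Pg_between] \<open>u < u0\<close> by blast
    moreover have "W' x z < 0" using P[OF \<open>Pf x\<close> Pg_between] z by simp
    then have "(u0 - u) * W' x z < 0" using \<open>u < u0\<close> by (simp add: mult_pos_neg)
    ultimately show ?thesis by simp
  qed
  moreover have "\<forall>\<^sub>F u in at_left u0. u0 - d < u \<and> u < u0"
    using eventually_at_left_real[of "u0 - d" u0] \<open>0 < d\<close> by simp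
  ultimately show ?thesis
    unfolding eventually_prod_filter using Pf
    by (intro exI[of _ Pf] exI[of _ "\<lambda>u. u0 - d < u \<and> u < u0"]) auto
qed

lemma filterlim_sin_sq_at_left_1: "filterlim (\<lambda>y. (sin y)^2) (at_left 1) (at (pi/2))"
proof (rule tendsto_imp_filterlim_at_left)
  show "((\<lambda>y. (sin y)^2) \<longlongrightarrow> 1) (at (pi/2))"
    by (auto intro!: tendsto_eq_intros)
  have "(sin y)^2 < 1" if "y \<noteq> pi/2" "dist y (pi/2) < pi/2" for y
  proof -
    have "\<bar>y - pi/2\<bar> < pi/2" using that(2) by (simp add: dist_real_def)
    then have "- pi < y - pi/2" "y - pi/2 < pi" using pi_gt_zero by (auto simp only: abs_less_iff)
    moreover have "y - pi/2 \<noteq> 0" using that(1) by simp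
    ultimately have "sin (y - pi/2) \<noteq> 0" using sin_eq_0_pi by blast
    moreover have "sin y = cos (y - pi/2)" by (simp add: cos_diff)
    then have "(sin y)^2 = 1 - (sin (y - pi/2))^2" by (simp add: cos_squared_eq)
    ultimately show ?thesis by simp
  qed
  then show "\<forall>\<^sub>F y in at (pi/2). (sin y)^2 < 1"
    unfolding eventually_at by (intro exI[of _ "pi/2"]) auto
qed

lemma strict_local_min2_iff_eventually:
  "strict_local_min2 V x0 y0 \<longleftrightarrow>
     (\<forall>\<^sub>F (x, y) in nhds (x0, y0). (x, y) \<noteq> (x0, y0) \<longrightarrow> V x0 y0 < V x y)"
  unfolding strict_local_min2_def eventually_nhds_metric by (auto simp: split_paired_All)

lemma strict_local_min2_sin_sq:
  fixes V W :: "real \<Rightarrow> real \<Rightarrow> real"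
  assumes V: "\<forall>\<^sub>F x in nhds x0. \<forall>y. V x y = W x ((sin y)^2)"
    and min_x: "\<forall>\<^sub>F x in at x0. W x0 1 < W x 1"
    and min_u: "\<forall>\<^sub>F (x, u) in nhds x0 \<times>\<^sub>F at_left 1. W x 1 < W x u"
  shows "strict_local_min2 V x0 (pi/2)"
proof -
  obtain Pf Pg where Pf: "eventually Pf (nhds x0)" and Pg: "eventually Pg (at_left 1)"
    and P: "\<And>x u. Pf x \<Longrightarrow> Pg u \<Longrightarrow> W x 1 < W x u"
    using min_u unfolding eventually_prod_filter by auto
  have "\<forall>\<^sub>F y in at (pi/2). Pg ((sin y)^2)"
    using Pg filterlim_sin_sq_at_left_1 by (rule eventually_compose_filterlim)
  then have Py: "\<forall>\<^sub>F y in nhds (pi/2). y \<noteq> pi/2 \<longrightarrow> Pg ((sin y)^2)"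
    unfolding eventually_at_filter by simp
  have Px: "\<forall>\<^sub>F x in nhds x0.
      (\<forall>y. V x y = W x ((sin y)^2)) \<and> (x \<noteq> x0 \<longrightarrow> W x0 1 < W x 1) \<and> Pf x"
    using V min_x[unfolded eventually_at_filter] Pf by eventually_elim auto
  have V0: "V x0 (pi/2) = W x0 1" using eventually_nhds_x_imp_x[OF V] by simp
  have less: "V x0 (pi/2) < V x y"
    if x: "(\<forall>y. V x y = W x ((sin y)^2)) \<and> (x \<noteq> x0 \<longrightarrow> W x0 1 < W x 1) \<and> Pf x"
      and y: "y \<noteq> pi/2 \<longrightarrow> Pg ((sin y)^2)" and ne: "(x, y) \<noteq> (x0, pi/2)" for x y
  proof (cases "y = pi/2")
    case True
    have "V x y = W x 1" using x unfolding True by simp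
    moreover have "x \<noteq> x0" using ne True by simp
    ultimately show ?thesis using x V0 by simp
  next
    case False
    then have "W x 1 < W x ((sin y)^2)" using P x y by blast
    moreover have "W x0 1 \<le> W x 1" using x by (cases "x = x0") auto
    ultimately show ?thesis using x V0 by auto
  qed
  have "\<forall>\<^sub>F (x, y) in nhds x0 \<times>\<^sub>F nhds (pi/2).
      (x, y) \<noteq> (x0, pi/2) \<longrightarrow> V x0 (pi/2) < V x y"
    unfolding eventually_prod_filter using Px Py less by blast
  then show ?thesis unfolding strict_local_min2_iff_eventually nhds_prod .
qed

lemma strict_local_min2_Veff:
  assumes r: "1 < r" and crit: "Wpot_r B L E r 1 = 0"
    and rr: "((\<lambda>r. Wpot_r B L E r 1) has_real_derivative p) (at r)" and "0 < p"
    and u: "Wpot_u B L E r 1 < 0"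
  shows "strict_local_min2 (Veff B L E) r (pi/2)"
proof (rule strict_local_min2_sin_sq[where W = "Wpot B L E"])
  show "\<forall>\<^sub>F x in nhds r. \<forall>y. Veff B L E x y = Wpot B L E x ((sin y)^2)"
    using eventually_greater_nhds[OF r] by eventually_elim (simp add: Veff_eq_Wpot)
  have "\<forall>\<^sub>F x in nhds r. ((\<lambda>x. Wpot B L E x 1) has_real_derivative Wpot_r B L E x 1) (at x)"
    using eventually_greater_nhds[OF r] by eventually_elim (simp add: has_real_derivative_Wpot_r)
  then show "\<forall>\<^sub>F x in at r. Wpot B L E r 1 < Wpot B L E x 1"
    using crit rr \<open>0 < p\<close> by (rule second_derivative_test_strict_min)
  have lam_cont: "isCont (\<lambda>z. lam B (fst z) (snd z)) z" for z
    unfolding lam_def by (intro continuous_intros) simp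
  have "isCont (\<lambda>z. Wpot_u B L E (fst z) (snd z)) (r, 1)"
    unfolding Wpot_u_def using r lam_pos[of 1 B r]
    by (intro continuous_intros lam_cont) auto
  then have "\<forall>\<^sub>F z in at (r, 1). Wpot_u B L E (fst z) (snd z) < 0"
    unfolding isCont_def using u by (auto dest: order_tendstoD(2))
  then have "\<forall>\<^sub>F z in nhds (r, 1). Wpot_u B L E (fst z) (snd z) < 0"
    unfolding eventually_at_filter by (rule eventually_mono) (use u in auto)
  moreover have "\<forall>\<^sub>F z in nhds (r, 1). 1 < fst z \<and> 0 < (snd z :: real)"
    unfolding nhds_prod
    by (rule eventually_prodI[OF eventually_greater_nhds[OF r] eventually_greater_nhds[OF zero_less_one]])
  ultimately have "\<forall>\<^sub>F (x, u) in nhds (r, 1).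
      (Wpot B L E x has_real_derivative Wpot_u B L E x u) (at u) \<and> Wpot_u B L E x u < 0"
    by eventually_elim (auto simp: case_prod_beta intro: has_real_derivative_Wpot_u)
  then show "\<forall>\<^sub>F (x, u) in nhds r \<times>\<^sub>F at_left 1. Wpot B L E x 1 < Wpot B L E x u"
    by (rule eventually_less_at_left_of_deriv_neg)
qed


section \<open>The polynomials Z and N\<close>

lemma Zf_pos_imp_B_sq_r_sq_lt:
  assumes "1 < r" "0 < Zf B r"
  shows "B^2 * r^2 < 4/3"
proof -
  have pos: "0 < 3/2 * r - 5/4" using assms(1) by simp
  have "B^2 * r^2 * (3/2 * r - 5/4) < 2 * r - 3" using assms(2) unfolding Zf_def by linarith
  also have "\<dots> < 4/3 * (3/2 * r - 5/4)" by simp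
  finally show ?thesis using mult_less_cancel_right_pos[OF pos] by blast
qed

lemma Zf_factor:
  assumes "Zf B a = 0" "Zf B b = 0" "a \<noteq> b"
  shows "Zf B x = (x - a) * (b - x) * (B^2 * (3/2 * (x + a + b) - 5/4))"
proof -
  have "(b - a) * (Zf B x - (x - a) * (b - x) * (B^2 * (3/2 * (x + a + b) - 5/4)))
      = (b - x) * Zf B a + (x - a) * Zf B b"
    unfolding Zf_def by algebra
  then show ?thesis using assms by simp
qed

text \<open>At B = Bn the radius rn is a common root of Zf and Nf.\<close>
definition rn :: real where
  "rn = (8 + sqrt 19) / 6"

lemma sqrt_19_gt_4: "4 < sqrt (19::real)"
  by (rule real_less_rsqrt) simp

lemma rn_gt_3_2: "3/2 < rn"
  using sqrt_19_gt_4 by (simp add: rn_def)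

lemma Zf_rn: "144 * Zf B rn = (sqrt 19 - 1) * (48 - B^2 * (169 + 38 * sqrt 19))"
proof -
  have "4 * Zf B rn = 8 * rn - 12 - B^2 * rn^2 * (6 * rn - 5)" by (simp add: Zf_def algebra_simps)
  moreover have "6 * rn = 8 + sqrt 19" "(sqrt 19)^2 = (19::real)" by (simp_all add: rn_def)
  ultimately show ?thesis by algebra
qed

lemma Zf_rn_pos:
  assumes "0 \<le> B" "B < Bn"
  shows "0 < Zf B rn"
proof -
  have pos: "0 < 169 + 38 * sqrt (19::real)" by (simp add: add_pos_nonneg)
  have "B^2 < Bn^2" using assms by (intro power_strict_mono) auto
  also have "Bn^2 = 48 / (169 + 38 * sqrt 19)"
    using pos unfolding Bn_def by (simp add: power_divide power_mult_distrib)
  finally have "B^2 * (169 + 38 * sqrt 19) < 48" using pos by (simp add: field_simps)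
  then have "0 < 144 * Zf B rn" unfolding Zf_rn using sqrt_19_gt_4 by simp
  then show ?thesis by simp
qed

lemma Zf_roots:
  assumes "0 < B" "B < Bn"
  obtains r1 r2 where "3/2 < r1" "r1 < rn" "rn < r2" "Zf B r1 = 0" "Zf B r2 = 0"
proof -
  have cont: "isCont (Zf B) x" for x unfolding Zf_def by (intro continuous_intros)
  have Zrn: "0 < Zf B rn" using Zf_rn_pos assms by simp
  have "Zf B (3/2) < 0" using assms(1) unfolding Zf_def by simp
  then obtain r1 where r1: "3/2 \<le> r1" "r1 \<le> rn" "Zf B r1 = 0"
    using IVT[of "Zf B" "3/2" 0 rn] Zrn rn_gt_3_2 cont by force
  define R where "R = rn + 3 / B"
  have "rn < R" "3 \<le> B * R" using assms(1) rn_gt_3_2 by (auto simp: R_def field_simps)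
  then have "9 \<le> B^2 * R^2"
    using power_mono[of 3 "B * R" 2] by (simp add: power_mult_distrib)
  then have "9 * (3/2 * R - 5/4) \<le> B^2 * R^2 * (3/2 * R - 5/4)"
    using \<open>rn < R\<close> rn_gt_3_2 by (intro mult_right_mono) auto
  then have "Zf B R \<le> 2 * R - 3 - 9 * (3/2 * R - 5/4)" unfolding Zf_def by linarith
  also have "\<dots> < 0" using \<open>rn < R\<close> rn_gt_3_2 by (simp add: field_simps)
  finally have "Zf B R < 0" .
  then obtain r2 where r2: "rn \<le> r2" "r2 \<le> R" "Zf B r2 = 0"
    using IVT2[of "Zf B" R 0 rn] Zrn \<open>rn < R\<close> cont by force
  have "r1 \<noteq> 3/2" "r1 \<noteq> rn" "r2 \<noteq> rn"
    using r1(3) r2(3) Zrn \<open>Zf B (3/2) < 0\<close> by (metis less_irrefl)+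
  then show ?thesis using that r1 r2 by force
qed

lemma Zf_sign_between_roots:
  assumes "0 < B" "3/2 < r1" "r1 < r2" "Zf B r1 = 0" "Zf B r2 = 0"
  shows "1 < x \<and> 0 < Zf B x \<longleftrightarrow> r1 < x \<and> x < r2"
    and "r1 \<le> x \<Longrightarrow> x \<le> r2 \<Longrightarrow> 0 \<le> Zf B x"
proof -
  define c where "c = B^2 * (3/2 * (x + r1 + r2) - 5/4)"
  have Z: "Zf B x = (x - r1) * (r2 - x) * c"
    using assms unfolding c_def by (intro Zf_factor) auto
  have "0 < c" if "0 \<le> x"
    using assms that unfolding c_def by (intro mult_pos_pos) auto
  then show "1 < x \<and> 0 < Zf B x \<longleftrightarrow> r1 < x \<and> x < r2"
    unfolding Z using assms(2,3) by (cases "1 < x") (auto simp: zero_less_mult_iff)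
  show "r1 \<le> x \<Longrightarrow> x \<le> r2 \<Longrightarrow> 0 \<le> Zf B x"
    unfolding Z using \<open>0 \<le> x \<Longrightarrow> 0 < c\<close> assms(2) by (intro mult_nonneg_nonneg) auto
qed

lemma Zf_pos_set:
  assumes "0 \<le> B" "B < Bn"
  shows "\<exists>r1 (r2::ereal). {r. 1 < r \<and> Zf B r > 0} = {r. r1 < r \<and> ereal r < r2}
           \<and> ereal r1 < r2 \<and> (r2 = \<infinity> \<longleftrightarrow> B = 0)"
proof (cases "B = 0")
  case True
  then have "Zf B r = 2 * r - 3" for r by (simp add: Zf_def)
  then have "{r. 1 < r \<and> Zf B r > 0} = {r. 3/2 < r \<and> ereal r < \<infinity>}" by auto
  with True show ?thesis by (intro exI[of _ "3/2"] exI[of _ "\<infinity>::ereal"]) simp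
next
  case False
  with assms(1) have "0 < B" by simp
  then obtain r1 r2 where r: "3/2 < r1" "r1 < rn" "rn < r2" and Z: "Zf B r1 = 0" "Zf B r2 = 0"
    using Zf_roots assms(2) by blast
  then have "r1 < r2" by simp
  have "1 < x \<and> 0 < Zf B x \<longleftrightarrow> r1 < x \<and> x < r2" for x
    using Zf_sign_between_roots(1)[OF \<open>0 < B\<close> r(1) \<open>r1 < r2\<close> Z] .
  then have "{r. 1 < r \<and> Zf B r > 0} = {r. r1 < r \<and> ereal r < ereal r2}" by simp
  with False \<open>r1 < r2\<close> show ?thesis by (intro exI[of _ r1] exI[of _ "ereal r2"]) simp
qed

lemma quadratic_rn: "12 * r^2 - 32 * r + 15 = (r - rn) * (12 * r - 16 + 2 * sqrt 19)"
proof -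
  have "6 * rn = 8 + sqrt 19" "(sqrt 19)^2 = (19::real)" by (simp_all add: rn_def)
  then show ?thesis by algebra
qed

lemma Nf_at_Zf_root:
  assumes "Zf B r = 0" "3/2 < r"
  obtains c where "0 < c" "Nf B r = c * (r - rn)"
proof -
  define P where "P = 32 + 160 * (r - 3/2) + 256 * (r - 3/2)^2 + 128 * (r - 3/2)^3"
  define w where "w = B^2 * r^2 * (6 * r - 5)"
  have w: "w = 4 * (2 * r - 3)"
    using assms(1) unfolding w_def Zf_def by (simp add: algebra_simps)
  have "Nf B r * (6 * r - 5)^3 = 64 * (r - 3) * (6 * r - 5)^3
      + 16 * w * (16 * r^2 - 39 * r + 21) * (6 * r - 5)^2
      - 4 * w^2 * (24 * r^2 - 51 * r + 25) * (6 * r - 5) + w^3 * (24 * r^2 - 37 * r + 15)"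
    unfolding Nf_def w_def by algebra
  also have "\<dots> = 32 * (12 * r^2 - 32 * r + 15) * P"
    unfolding w P_def by algebra
  finally have "Nf B r * (6 * r - 5)^3 = 32 * (12 * r^2 - 32 * r + 15) * P" .
  then have "Nf B r = 32 * (12 * r - 16 + 2 * sqrt 19) * P / (6 * r - 5)^3 * (r - rn)"
    using assms(2) unfolding quadratic_rn by (simp add: field_simps)
  moreover have "0 < 32 * (12 * r - 16 + 2 * sqrt 19) * P / (6 * r - 5)^3"
    using assms(2) by (auto simp: P_def intro!: divide_pos_pos mult_pos_pos add_pos_nonneg)
  ultimately show ?thesis using that by blast
qed

definition Nf_deriv :: "real \<Rightarrow> real \<Rightarrow> real" where
  "Nf_deriv B r = 64 + 16 * B^2 * (64 * r^3 - 117 * r^2 + 42 * r)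
     - 4 * B^4 * (144 * r^5 - 255 * r^4 + 100 * r^3) + B^6 * (192 * r^7 - 259 * r^6 + 90 * r^5)"

lemma has_real_derivative_Nf: "(Nf B has_real_derivative Nf_deriv B r) (at r)"
proof -
  have "Nf B = (\<lambda>r. 64 * (r - 3) + 16 * B^2 * (16 * r^4 - 39 * r^3 + 21 * r^2)
      - 4 * B^4 * (24 * r^6 - 51 * r^5 + 25 * r^4) + B^6 * (24 * r^8 - 37 * r^7 + 15 * r^6))"
    unfolding Nf_def by (rule ext) algebra
  then show ?thesis
    unfolding Nf_deriv_def by (auto intro!: derivative_eq_intros simp: algebra_simps)
qed

text \<open>With s = r - 3/2 > 0, v = B^2 r^2 (6r - 5)/8 \<ge> 0 and w = s - v = Zf B r / 2 \<ge> 0,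
  r N'(r) (6r - 5)^3 / 64 is a polynomial in s, v, w with positive coefficients.\<close>
lemma Nf_deriv_pos:
  assumes "3/2 < r" "0 \<le> Zf B r"
  shows "0 < Nf_deriv B r"
proof -
  define s v w where "s = r - 3/2" and "v = B^2 * r^2 * (6 * r - 5) / 8" and "w = s - v"
  have "2 * w = Zf B r" by (simp add: w_def s_def v_def Zf_def field_simps)
  then have "0 \<le> w" using assms(2) by simp
  moreover have "0 < s" "0 \<le> v" using assms(1) by (simp_all add: s_def v_def)
  ultimately have "0 < 96 + 496 * s + 336 * v + 936 * s^2 + 2744 * s * v + 664 * v * w
      + 756 * s^3 + 6176 * s^2 * v + 3828 * s * v * w + 1068 * v^3 + 216 * s^4 + 4992 * s^3 * v
      + 6552 * s^2 * v * w + 2536 * s * v^3 + 1152 * s^4 * v + 3456 * s^3 * v * w + 1536 * s^2 * v^3"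
    by (intro add_pos_nonneg add_nonneg_nonneg mult_nonneg_nonneg) auto
  also have "\<dots> = r * Nf_deriv B r * (6 * r - 5)^3 / 64"
    unfolding s_def v_def w_def Nf_deriv_def by algebra
  finally show ?thesis using assms(1) by (simp add: zero_less_mult_iff)
qed

lemma Nf_strict_mono:
  assumes "3/2 < x" "x < y" "\<And>t. x \<le> t \<Longrightarrow> t \<le> y \<Longrightarrow> 0 \<le> Zf B t"
  shows "Nf B x < Nf B y"
proof (rule DERIV_pos_imp_increasing[OF assms(2)])
  fix t assume "x \<le> t" "t \<le> y"
  then have "0 < Nf_deriv B t" using assms by (intro Nf_deriv_pos) auto
  then show "\<exists>D. DERIV (Nf B) t :> D \<and> 0 < D" using has_real_derivative_Nf by blast
qed

lemma Nf_sign_change_pos: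
  assumes "0 < B" "B < Bn"
  obtains rs where "1 < rs" "0 < Zf B rs" "Nf B rs = 0"
    "\<And>r. 1 < r \<Longrightarrow> 0 < Zf B r \<Longrightarrow> r < rs \<Longrightarrow> Nf B r < 0"
    "\<And>r. 1 < r \<Longrightarrow> 0 < Zf B r \<Longrightarrow> rs < r \<Longrightarrow> 0 < Nf B r"
proof -
  obtain r1 r2 where r: "3/2 < r1" "r1 < rn" "rn < r2" and Z: "Zf B r1 = 0" "Zf B r2 = 0"
    using Zf_roots assms by blast
  then have "r1 < r2" by simp
  note sign = Zf_sign_between_roots[OF assms(1) r(1) \<open>r1 < r2\<close> Z]
  have mono: "Nf B x < Nf B y" if "r1 \<le> x" "x < y" "y \<le> r2" for x y
    using that r(1) sign(2) by (intro Nf_strict_mono) auto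
  obtain c1 where "0 < c1" "Nf B r1 = c1 * (r1 - rn)" using Nf_at_Zf_root[OF Z(1)] r(1) by blast
  with r have N1: "Nf B r1 < 0" by (simp add: mult_pos_neg)
  obtain c2 where "0 < c2" "Nf B r2 = c2 * (r2 - rn)" using Nf_at_Zf_root[OF Z(2)] r by auto
  with r have N2: "0 < Nf B r2" by simp
  have "isCont (Nf B) x" for x unfolding Nf_def by (intro continuous_intros)
  then obtain rs where rs: "r1 \<le> rs" "rs \<le> r2" "Nf B rs = 0"
    using IVT[of "Nf B" r1 0 r2] N1 N2 \<open>r1 < r2\<close> by auto
  have "rs \<noteq> r1" "rs \<noteq> r2" using rs(3) N1 N2 by auto
  with rs have "r1 < rs" "rs < r2" by simp_all
  show ?thesis
  proof
    show "1 < rs" "0 < Zf B rs" using sign(1)[of rs] \<open>r1 < rs\<close> \<open>rs < r2\<close> by simp_all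
    show "Nf B rs = 0" by fact
    show "Nf B r < 0" if "1 < r" "0 < Zf B r" "r < rs" for r
      using mono[of r rs] sign(1)[of r] that rs(3) \<open>rs < r2\<close> by simp
    show "0 < Nf B r" if "1 < r" "0 < Zf B r" "rs < r" for r
      using mono[of rs r] sign(1)[of r] that rs(3) \<open>r1 < rs\<close> by simp
  qed
qed

lemma Nf_sign_change:
  assumes "0 \<le> B" "B < Bn"
  obtains rs where "1 < rs" "0 < Zf B rs" "Nf B rs = 0"
    "\<And>r. 1 < r \<Longrightarrow> 0 < Zf B r \<Longrightarrow> r < rs \<Longrightarrow> Nf B r < 0"
    "\<And>r. 1 < r \<Longrightarrow> 0 < Zf B r \<Longrightarrow> rs < r \<Longrightarrow> 0 < Nf B r"
    "B = 0 \<Longrightarrow> rs = 3"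
proof (cases "B = 0")
  case True
  then have "Zf B r = 2 * r - 3" "Nf B r = 64 * (r - 3)" for r by (simp_all add: Zf_def Nf_def)
  then show ?thesis by (intro that[of 3]) auto
next
  case False
  with assms(1) have "0 < B" by simp
  then obtain rs where "1 < rs" "0 < Zf B rs" "Nf B rs = 0"
    "\<And>r. 1 < r \<Longrightarrow> 0 < Zf B r \<Longrightarrow> r < rs \<Longrightarrow> Nf B r < 0"
    "\<And>r. 1 < r \<Longrightarrow> 0 < Zf B r \<Longrightarrow> rs < r \<Longrightarrow> 0 < Nf B r"
    using Nf_sign_change_pos assms(2) by blast
  with False show ?thesis by (intro that[of rs]) auto
qed

section \<open>Circular orbits\<close>

lemma bf_pos: "0 < bf B r"
  unfolding bf_def by (simp add: add_pos_nonneg)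

lemma Zf_eq_bf: "Zf B r = 2 * r - 3 - (bf B r - 1) * (6 * r - 5)"
  unfolding Zf_def bf_def by (simp add: field_simps)

lemma Nf_eq_bf:
  "Nf B r = 64 * (r - 3 + (bf B r - 1) * (16 * r^2 - 39 * r + 21) - (bf B r - 1)^2 * (24 * r^2 - 51 * r + 25)
     + (bf B r - 1)^3 * (24 * r^2 - 37 * r + 15))"
proof -
  define q where "q = bf B r - 1"
  have q: "B^2 * r^2 = 4 * q" by (simp add: q_def bf_def)
  have "Nf B r = 64 * (r - 3) + 16 * (B^2 * r^2) * (16 * r^2 - 39 * r + 21)
      - 4 * (B^2 * r^2)^2 * (24 * r^2 - 51 * r + 25) + (B^2 * r^2)^3 * (24 * r^2 - 37 * r + 15)"
    unfolding Nf_def by algebra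
  also have "\<dots> = 64 * (r - 3 + q * (16 * r^2 - 39 * r + 21) - q^2 * (24 * r^2 - 51 * r + 25)
      + q^3 * (24 * r^2 - 37 * r + 15))"
    unfolding q by algebra
  finally show ?thesis unfolding q_def .
qed

context
  fixes B rc :: real
  assumes rc: "1 < rc" and Z: "0 < Zf B rc"
begin

lemma bf_circular_lt_2: "bf B rc < 2"
  using Zf_pos_imp_B_sq_r_sq_lt[OF rc Z] by (simp add: bf_def)

lemma Lc_sq: "(Lc B rc)^2 = rc^2 / (bf B rc)^2 * ((4 * (bf B rc - 1) * (rc - 1) + bf B rc) / Zf B rc)"
proof -
  have "0 \<le> (4 * (bf B rc - 1) * (rc - 1) + bf B rc) / Zf B rc"
    using Z rc bf_pos[of B rc] by (intro divide_nonneg_pos add_nonneg_nonneg) (auto simp: bf_def)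
  then show ?thesis unfolding Lc_def by (simp add: power_mult_distrib power_divide)
qed

lemma Ec_sq: "(Ec B rc)^2 = 2 * (bf B rc)^2 * (rc - 1)^2 * (2 - bf B rc) / (rc * Zf B rc)"
proof -
  have "0 \<le> (4 - B^2 * rc^2) / (2 * rc * Zf B rc)"
    using Z rc Zf_pos_imp_B_sq_r_sq_lt[OF rc Z] by (intro divide_nonneg_pos) auto
  then have "(Ec B rc)^2 = (bf B rc)^2 * (rc - 1)^2 * ((4 - B^2 * rc^2) / (2 * rc * Zf B rc))"
    unfolding Ec_def by (simp add: power_mult_distrib)
  moreover have "4 - B^2 * rc^2 = 4 * (2 - bf B rc)" by (simp add: bf_def)
  ultimately show ?thesis using rc Z by (simp add: field_simps)
qed

lemma Wpot_r_circular: "Wpot_r B (Lc B rc) (Ec B rc) rc 1 = 0"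
proof -
  define b m P where "b = bf B rc" and "m = rc - 1" and "P = 4 * (b - 1) * m + b"
  have nz: "b \<noteq> 0" "m \<noteq> 0" "rc \<noteq> 0" "Zf B rc \<noteq> 0"
    using rc Z bf_pos[of B rc] by (auto simp: b_def m_def)
  have "(Lc B rc)^2 * b * (b - 2) / (rc^3 * 1) = P * (b - 2) / (b * rc * Zf B rc)"
    using nz unfolding Lc_sq b_def[symmetric] m_def[symmetric] P_def[symmetric]
    by (simp add: field_simps power2_eq_square power3_eq_cube)
  moreover have "(Ec B rc)^2 * (b + 4 * (b - 1) * m) / (2 * b^3 * m^2) = P * (2 - b) / (b * rc * Zf B rc)"
    using nz unfolding Ec_sq b_def[symmetric] m_def[symmetric] P_def
    by (simp add: field_simps power2_eq_square power3_eq_cube)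
  ultimately have "Wpot_r B (Lc B rc) (Ec B rc) rc 1
      = P * (b - 2) / (b * rc * Zf B rc) + P * (2 - b) / (b * rc * Zf B rc)"
    unfolding Wpot_r_def lam_1 b_def[symmetric] m_def[symmetric] by simp
  then show ?thesis using nz by (simp add: field_simps)
qed

lemma Wpot_circular: "Wpot B (Lc B rc) (Ec B rc) rc 1 = -1/2"
proof -
  define b m P where "b = bf B rc" and "m = rc - 1" and "P = 4 * (b - 1) * m + b"
  have nz: "b \<noteq> 0" "m \<noteq> 0" "rc \<noteq> 0" "Zf B rc \<noteq> 0"
    using rc Z bf_pos[of B rc] by (auto simp: b_def m_def)
  have "Wpot B (Lc B rc) (Ec B rc) rc 1 = (P - 2 * m * (2 - b)) / (2 * Zf B rc)"
    using nz unfolding Wpot_def lam_1 Lc_sq Ec_sq b_def[symmetric] m_def[symmetric] P_def[symmetric]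
    by (simp add: field_simps power2_eq_square)
  also have "P - 2 * m * (2 - b) = - Zf B rc"
    unfolding Zf_eq_bf P_def b_def m_def by (simp add: algebra_simps)
  finally show ?thesis using nz by simp
qed

lemma Wpot_u_circular: "Wpot_u B (Lc B rc) (Ec B rc) rc 1 = (bf B rc - 2) / (2 * Zf B rc)"
proof -
  define b m P where "b = bf B rc" and "m = rc - 1" and "P = 4 * (b - 1) * m + b"
  have nz: "b \<noteq> 0" "m \<noteq> 0" "rc \<noteq> 0" "Zf B rc \<noteq> 0"
    using rc Z bf_pos[of B rc] by (auto simp: b_def m_def)
  have "Wpot_u B (Lc B rc) (Ec B rc) rc 1 = (b - 2) * (P - 4 * m * (b - 1)) / (2 * b * Zf B rc)"
    using nz unfolding Wpot_u_def lam_1 Lc_sq Ec_sq b_def[symmetric] m_def[symmetric] P_def[symmetric]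
    by (simp add: field_simps power2_eq_square power3_eq_cube)
  also have "P - 4 * m * (b - 1) = b" by (simp add: P_def)
  finally show ?thesis using nz by (simp add: b_def)
qed

lemma Wpot_rr_circular:
  "Wpot_rr B (Lc B rc) (Ec B rc) rc = Nf B rc / (64 * (bf B rc)^2 * rc^2 * (rc - 1) * Zf B rc)"
proof -
  define b m P where "b = bf B rc" and "m = rc - 1" and "P = 4 * (b - 1) * m + b"
  define X where "X = 6 * (b - 1) * (2 * rc - 1) * b * m - P * (6 * (b - 1) * m + 2 * rc * b)"
  have nz: "b \<noteq> 0" "m \<noteq> 0" "rc \<noteq> 0" "Zf B rc \<noteq> 0"
    using rc Z bf_pos[of B rc] by (auto simp: b_def m_def)
  have "Wpot_rr B (Lc B rc) (Ec B rc) rc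
      = (Lc B rc)^2 * (b^2 - 2 * b + 4) / rc^4 + (Ec B rc)^2 * X / (2 * rc * b^4 * m^3)"
    unfolding Wpot_rr_def X_def P_def b_def m_def ..
  also have "\<dots> = (P * (b^2 - 2 * b + 4) * m + (2 - b) * X) / (b^2 * rc^2 * m * Zf B rc)"
    using nz unfolding Lc_sq Ec_sq b_def[symmetric] m_def[symmetric] P_def[symmetric]
    by (simp add: field_simps power2_eq_square power3_eq_cube power4_eq_xxxx)
  also have "P * (b^2 - 2 * b + 4) * m + (2 - b) * X = Nf B rc / 64"
    unfolding Nf_eq_bf b_def[symmetric] X_def P_def m_def by algebra
  finally show ?thesis by (simp add: b_def m_def ac_simps)
qed

lemma has_real_derivative_Wpot_r_circular:
  "((\<lambda>r. Wpot_r B (Lc B rc) (Ec B rc) r 1) has_real_derivative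
      Nf B rc / (64 * (bf B rc)^2 * rc^2 * (rc - 1) * Zf B rc)) (at rc)"
  using has_real_derivative_Wpot_r_1[OF rc, where B = B and L = "Lc B rc" and E = "Ec B rc"]
  by (simp add: Wpot_rr_circular)

lemma circular_orbit_fixed_point:
  "HamVF B (Lc B rc) (Ec B rc) (equator rc) = 0 \<and> Ham B (Lc B rc) (Ec B rc) (equator rc) = -1/2"
  using HamVF_equator[OF rc] Wpot_r_circular Wpot_circular
  by (simp add: Ham_phase_pt Veff_eq_Wpot[OF rc])

lemma linHam_circular:
  "linHam B (Lc B rc) (Ec B rc) (equator rc) = Jmat_diag (Gam rc / (bf B rc)^2) (1 / (rc^2 * (bf B rc)^2))
     (Nf B rc / (64 * (bf B rc)^2 * rc^2 * (rc - 1) * Zf B rc)) ((2 - bf B rc) / Zf B rc)"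
proof -
  have "- 2 * Wpot_u B (Lc B rc) (Ec B rc) rc 1 = (2 - bf B rc) / Zf B rc"
    using Z by (simp add: Wpot_u_circular field_simps)
  then show ?thesis
    using linHam_equator[OF rc] DERIV_imp_deriv[OF has_real_derivative_Wpot_r_circular] by simp
qed

lemma circular_orbit_saddle_center:
  assumes "Nf B rc < 0"
  shows "saddle_center (linHam B (Lc B rc) (Ec B rc) (equator rc))
    \<and> lin_unstable (linHam B (Lc B rc) (Ec B rc) (equator rc))"
  unfolding linHam_circular
  using assms rc Z bf_pos[of B rc] bf_circular_lt_2
  by (intro saddle_center_Jmat_diag) (auto simp: Gam_def divide_neg_pos mult_pos_neg)

lemma circular_orbit_center_center:
  assumes "0 < Nf B rc"
  shows "center_center (linHam B (Lc B rc) (Ec B rc) (equator rc))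
    \<and> strict_local_min2 (Veff B (Lc B rc) (Ec B rc)) rc (pi/2)"
proof
  show "center_center (linHam B (Lc B rc) (Ec B rc) (equator rc))"
    unfolding linHam_circular using assms rc Z bf_pos[of B rc] bf_circular_lt_2
    by (intro center_center_Jmat_diag) (auto simp: Gam_def)
  have "0 < Nf B rc / (64 * (bf B rc)^2 * rc^2 * (rc - 1) * Zf B rc)"
    using assms rc Z bf_pos[of B rc] by simp
  moreover have "Wpot_u B (Lc B rc) (Ec B rc) rc 1 < 0"
    using Wpot_u_circular Z bf_circular_lt_2 by (simp add: divide_neg_pos)
  ultimately show "strict_local_min2 (Veff B (Lc B rc) (Ec B rc)) rc (pi/2)"
    using strict_local_min2_Veff[OF rc Wpot_r_circular has_real_derivative_Wpot_r_circular] by blast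
qed

end

theorem mainTheorem2:
  fixes B :: real
  assumes "0 \<le> B" and "B < Bn"
  shows
    "(\<exists>r1 (r2::ereal). {r. 1 < r \<and> Zf B r > 0} = {r. r1 < r \<and> ereal r < r2}
         \<and> ereal r1 < r2 \<and> (r2 = \<infinity> \<longleftrightarrow> B = 0))
     \<and> (\<forall>rc. 1 < rc \<and> Zf B rc > 0 \<longrightarrow>
          HamVF B (Lc B rc) (Ec B rc) (phase_pt 0 0 rc (pi/2)) = 0
          \<and> Ham B (Lc B rc) (Ec B rc) (phase_pt 0 0 rc (pi/2)) = -1/2)
     \<and> (\<exists>rs. 1 < rs \<and> Zf B rs > 0 \<and> Nf B rs = 0
          \<and> (\<forall>rc. 1 < rc \<and> Zf B rc > 0 \<and> rc < rs \<longrightarrow>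
                 saddle_center (linHam B (Lc B rc) (Ec B rc) (phase_pt 0 0 rc (pi/2)))
                 \<and> lin_unstable (linHam B (Lc B rc) (Ec B rc) (phase_pt 0 0 rc (pi/2))))
          \<and> (\<forall>rc. 1 < rc \<and> Zf B rc > 0 \<and> rs < rc \<longrightarrow>
                 center_center (linHam B (Lc B rc) (Ec B rc) (phase_pt 0 0 rc (pi/2)))
                 \<and> strict_local_min2 (Veff B (Lc B rc) (Ec B rc)) rc (pi/2))
          \<and> (B = 0 \<longrightarrow> rs = 3))"
proof -
  obtain rs where rs: "1 < rs" "0 < Zf B rs" "Nf B rs = 0" "B = 0 \<Longrightarrow> rs = 3"
    and below: "\<And>rc. 1 < rc \<Longrightarrow> 0 < Zf B rc \<Longrightarrow> rc < rs \<Longrightarrow> Nf B rc < 0"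
    and above: "\<And>rc. 1 < rc \<Longrightarrow> 0 < Zf B rc \<Longrightarrow> rs < rc \<Longrightarrow> 0 < Nf B rc"
    using Nf_sign_change[OF assms] by metis
  show ?thesis
    using Zf_pos_set[OF assms] circular_orbit_fixed_point rs
      circular_orbit_saddle_center[OF _ _ below] circular_orbit_center_center[OF _ _ above]
    by blast
qed

end
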